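(* Let $\varphi$ be a flow on a locally compact metric space $X$, let $S\subset X$ be a nonempty compact invariant set, and let $\mathcal M=\{M_p\mid p\in\mathbb P\}$ be a finite indexed family of mutually disjoint isolated invariant sets in $S$. The following are equivalent: (i) $\mathcal M$ is a Morse predecomposition of $S$; (ii) there exists a family $\{N_p\mid p\in\mathbb P\}$ of mutually disjoint isolating neighborhoods in $S$ such that $M_p=\operatorname{Inv}N_p$ for every $p$, and for every full solution $\gamma$ in $S$ there exist $p,q\in\mathbb P$ such that $\gamma$ wades through $N_p$ in minus infinity and wades through $N_q$ in plus infinity.
   Context: A full solution is a map $\gamma:\mathbb R\to X$ with $\gamma(s+t)=\varphi(\gamma(s),t)$; it is in $S$ if its image lies in $S$. $\alpha(\gamma)=\bigcap_{t<0}\operatorname{cl}\gamma((-\infty,t])$, $\omega(\gamma)=\bigcap_{t>0}\operatorname{cl}\gamma([t,\infty))$. $\operatorname{Inv}N=\{x\in N\mid\varphi(x,\mathbb R)\subset N\}$; invariant means $\operatorname{Inv}$ of itself. Isolating neighborhoods and isolated invariant sets "in $S$" refer to the flow restricted to $S$: a compact $N\subset S$ is an isolating neighborhood if $\operatorname{Inv}N\subset\operatorname{int}_S N$; isolated invariant sets are those of the form $\operatorname{Inv}N$ for such $N$. A full solution $\gamma$ in $S$ is a link from $S_1$ to $S_2$ if $\alpha(\gamma)\cap S_1\ne\emptyset\ne\omega(\gamma)\cap S_2$. A Morse predecomposition of $S$ is an indexed family of mutually disjoint closed invariant subsets $\{M_p\mid p\in\mathbb P\}$ of $S$ such that every full solution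 in $S$ is a link from $M_p$ to $M_q$ for some $p,q$. A full solution $\gamma$ wades through $N$ in plus infinity if there are real sequences $(t^-_n),(t^+_n)$ with $t^-_n\to+\infty$, $t^+_n-t^-_n\to+\infty$ and $\gamma([t^-_n,t^+_n])\subset N$ for all $n$; it wades through $N$ in minus infinity if there are such sequences with $t^+_n\to-\infty$, $t^+_n-t^-_n\to+\infty$ and $\gamma([t^-_n,t^+_n])\subset N$ for all $n$. *)

theory Defs
  imports "HOL-Analysis.Analysis"
begin

definition is_flow :: "('a::topological_space \<Rightarrow> real \<Rightarrow> 'a) \<Rightarrow> bool" where
  "is_flow \<phi> \<longleftrightarrow> continuous_on UNIV (\<lambda>(x, t). \<phi> x t) \<and> (\<forall>x. \<phi> x 0 = x)
     \<and> (\<forall>x s t. \<phi> (\<phi> x s) t = \<phi> x (s + t))"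

definition full_solution :: "('a \<Rightarrow> real \<Rightarrow> 'a) \<Rightarrow> (real \<Rightarrow> 'a) \<Rightarrow> bool" where
  "full_solution \<phi> \<gamma> \<longleftrightarrow> (\<forall>s t. \<gamma> (s + t) = \<phi> (\<gamma> s) t)"

definition full_solution_in :: "('a \<Rightarrow> real \<Rightarrow> 'a) \<Rightarrow> 'a set \<Rightarrow> (real \<Rightarrow> 'a) \<Rightarrow> bool" where
  "full_solution_in \<phi> S \<gamma> \<longleftrightarrow> full_solution \<phi> \<gamma> \<and> range \<gamma> \<subseteq> S"

definition alpha_limit :: "(real \<Rightarrow> 'a::topological_space) \<Rightarrow> 'a set" where
  "alpha_limit \<gamma> = (\<Inter>t\<in>{..<0}. closure (\<gamma> ` {..t}))"

definition omega_limit :: "(real \<Rightarrow> 'a::topological_space) \<Rightarrow> 'a set" where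
  "omega_limit \<gamma> = (\<Inter>t\<in>{0<..}. closure (\<gamma> ` {t..}))"

definition Inv :: "('a \<Rightarrow> real \<Rightarrow> 'a) \<Rightarrow> 'a set \<Rightarrow> 'a set" where
  "Inv \<phi> N = {x \<in> N. range (\<phi> x) \<subseteq> N}"

definition invariant :: "('a \<Rightarrow> real \<Rightarrow> 'a) \<Rightarrow> 'a set \<Rightarrow> bool" where
  "invariant \<phi> A \<longleftrightarrow> Inv \<phi> A = A"

definition isolating_nbhd_in :: "('a::topological_space \<Rightarrow> real \<Rightarrow> 'a) \<Rightarrow> 'a set \<Rightarrow> 'a set \<Rightarrow> bool" where
  "isolating_nbhd_in \<phi> S N \<longleftrightarrow> compact N \<and> N \<subseteq> S \<and> Inv \<phi> N \<subseteq> (top_of_set S) interior_of N"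

definition isolated_invariant_in :: "('a::topological_space \<Rightarrow> real \<Rightarrow> 'a) \<Rightarrow> 'a set \<Rightarrow> 'a set \<Rightarrow> bool" where
  "isolated_invariant_in \<phi> S M \<longleftrightarrow> (\<exists>N. isolating_nbhd_in \<phi> S N \<and> M = Inv \<phi> N)"

definition is_link_in :: "('a::topological_space \<Rightarrow> real \<Rightarrow> 'a) \<Rightarrow> 'a set \<Rightarrow> (real \<Rightarrow> 'a) \<Rightarrow> 'a set \<Rightarrow> 'a set \<Rightarrow> bool" where
  "is_link_in \<phi> S \<gamma> S1 S2 \<longleftrightarrow> full_solution_in \<phi> S \<gamma>
     \<and> alpha_limit \<gamma> \<inter> S1 \<noteq> {} \<and> omega_limit \<gamma> \<inter> S2 \<noteq> {}"

definition mutually_disjoint :: "'p set \<Rightarrow> ('p \<Rightarrow> 'a set) \<Rightarrow> bool" where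
  "mutually_disjoint P M \<longleftrightarrow> (\<forall>p\<in>P. \<forall>q\<in>P. p \<noteq> q \<longrightarrow> M p \<inter> M q = {})"

definition morse_predecomposition ::
  "('a::topological_space \<Rightarrow> real \<Rightarrow> 'a) \<Rightarrow> 'a set \<Rightarrow> 'p set \<Rightarrow> ('p \<Rightarrow> 'a set) \<Rightarrow> bool" where
  "morse_predecomposition \<phi> S P M \<longleftrightarrow>
     mutually_disjoint P M
     \<and> (\<forall>p\<in>P. closed (M p) \<and> invariant \<phi> (M p) \<and> M p \<subseteq> S)
     \<and> (\<forall>\<gamma>. full_solution_in \<phi> S \<gamma> \<longrightarrow> (\<exists>p\<in>P. \<exists>q\<in>P. is_link_in \<phi> S \<gamma> (M p) (M q)))"

definition wades_plus :: "(real \<Rightarrow> 'a) \<Rightarrow> 'a set \<Rightarrow> bool" where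
  "wades_plus \<gamma> N \<longleftrightarrow> (\<exists>tm tp :: nat \<Rightarrow> real.
     filterlim tm at_top sequentially \<and> filterlim (\<lambda>n. tp n - tm n) at_top sequentially
     \<and> (\<forall>n. \<gamma> ` {tm n..tp n} \<subseteq> N))"

definition wades_minus :: "(real \<Rightarrow> 'a) \<Rightarrow> 'a set \<Rightarrow> bool" where
  "wades_minus \<gamma> N \<longleftrightarrow> (\<exists>tm tp :: nat \<Rightarrow> real.
     filterlim tp at_bot sequentially \<and> filterlim (\<lambda>n. tp n - tm n) at_top sequentially
     \<and> (\<forall>n. \<gamma> ` {tm n..tp n} \<subseteq> N))"

end

theory Submission
  imports Defs
begin

text \<open>
  If \<open>\<gamma>\<close> wades through a compact set \<open>N\<close> in plus infinity, the midpoints of the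
  ever longer wading intervals have a limit point \<open>y \<in> \<omega>(\<gamma>)\<close> whose whole orbit stays
  in \<open>N\<close>, so \<open>y \<in> Inv N\<close>. Conversely, if \<open>\<omega>(\<gamma>)\<close> meets \<open>Inv N\<close> and \<open>Inv N\<close> lies in
  the interior of \<open>N\<close> relative to \<open>S\<close>, continuity of the flow (tube lemma) shows that
  \<open>\<gamma>\<close> returns arbitrarily late so close to that orbit that it follows it inside \<open>N\<close>
  for any prescribed time. Hence for isolating neighbourhoods \<open>N\<^sub>p\<close> with
  \<open>Inv N\<^sub>p = M\<^sub>p\<close>, wading through \<open>N\<^sub>p\<close> in plus infinity is the same as \<open>\<omega>(\<gamma>)\<close> meeting
  \<open>M\<^sub>p\<close>; minus infinity is the same statement for the time-reversed flow. For
  (i) \<open>\<Longrightarrow>\<close> (ii) the given isolating neighbourhoods are made disjoint by intersecting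
  them with closed \<open>\<delta>/3\<close>-neighbourhoods of the \<open>M\<^sub>p\<close>, where \<open>\<delta>\<close> separates the finitely
  many compact sets \<open>M\<^sub>p\<close>.
\<close>

lemma flow_add: "is_flow \<phi> \<Longrightarrow> \<phi> (\<phi> x s) t = \<phi> x (s + t)"
  by (simp add: is_flow_def)

lemma continuous_on_flow: "is_flow \<phi> \<Longrightarrow> continuous_on UNIV (\<lambda>(x, t). \<phi> x t)"
  by (simp add: is_flow_def)

lemma continuous_on_flow_at_time:
  assumes "is_flow \<phi>"
  shows "continuous_on UNIV (\<lambda>x. \<phi> x t)"
  using continuous_on_compose2[OF continuous_on_flow[OF assms], of UNIV "\<lambda>x. (x, t)"]
  by (simp add: continuous_on_Pair)

lemma Inv_subset: "Inv \<phi> N \<subseteq> N"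
  by (auto simp: Inv_def)

lemma Inv_mono: "A \<subseteq> B \<Longrightarrow> Inv \<phi> A \<subseteq> Inv \<phi> B"
  by (auto simp: Inv_def)

lemma flow_in_Inv:
  assumes "is_flow \<phi>" "x \<in> Inv \<phi> N"
  shows "\<phi> x t \<in> Inv \<phi> N"
  using assms by (auto simp: Inv_def flow_add)

lemma invariant_Inv: "is_flow \<phi> \<Longrightarrow> invariant \<phi> (Inv \<phi> N)"
  unfolding invariant_def using flow_in_Inv[of \<phi> _ N] Inv_subset[of \<phi>]
  by (auto simp: Inv_def[of _ "Inv \<phi> N"])

lemma closed_Inv:
  assumes "is_flow \<phi>" "closed N"
  shows "closed (Inv \<phi> N)"
proof -
  have "Inv \<phi> N = N \<inter> (\<Inter>t. (\<lambda>x. \<phi> x t) -` N)"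
    by (auto simp: Inv_def)
  also have "closed \<dots>"
    using closed_vimage[OF assms(2) continuous_on_flow_at_time[OF assms(1)]] assms(2)
    by (intro closed_Int closed_INT) auto
  finally show ?thesis .
qed

lemma Inv_Int_eq:
  assumes "is_flow \<phi>" "Inv \<phi> N \<subseteq> C"
  shows "Inv \<phi> (N \<inter> C) = Inv \<phi> N"
proof
  show "Inv \<phi> (N \<inter> C) \<subseteq> Inv \<phi> N"
    by (rule Inv_mono) blast
  show "Inv \<phi> N \<subseteq> Inv \<phi> (N \<inter> C)"
    using assms flow_in_Inv[OF assms(1)] Inv_subset[of \<phi> N] by (auto simp: Inv_def)
qed

lemma isolated_invariant_inD:
  fixes \<phi> :: "'a::metric_space \<Rightarrow> real \<Rightarrow> 'a"
  assumes "is_flow \<phi>" "isolated_invariant_in \<phi> S M"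
  shows "compact M" "invariant \<phi> M" "M \<subseteq> S"
proof -
  obtain N where N: "isolating_nbhd_in \<phi> S N" "M = Inv \<phi> N"
    using assms(2) by (auto simp: isolated_invariant_in_def)
  then have "compact N" "M \<subseteq> N" "N \<subseteq> S"
    by (auto simp: isolating_nbhd_in_def Inv_def)
  moreover have "compact (N \<inter> M)"
    using N(2) closed_Inv[OF assms(1) compact_imp_closed] \<open>compact N\<close> by (simp add: compact_Int_closed)
  ultimately show "compact M" "M \<subseteq> S"
    by (auto simp: Int_absorb1)
  show "invariant \<phi> M"
    using N(2) invariant_Inv[OF assms(1)] by simp
qed

lemma isolating_nbhd_in_Int:
  assumes "is_flow \<phi>" "isolating_nbhd_in \<phi> S N"
    and "closed C" "open U" "Inv \<phi> N \<subseteq> U" "U \<subseteq> C"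
  shows "isolating_nbhd_in \<phi> S (N \<inter> C)"
proof -
  have "Inv \<phi> N \<subseteq> (top_of_set S) interior_of C"
  proof (rule order_trans[OF _ interior_of_maximal])
    show "Inv \<phi> N \<subseteq> S \<inter> U"
      using assms(2,5) Inv_subset[of \<phi> N] by (auto simp: isolating_nbhd_in_def)
    show "openin (top_of_set S) (S \<inter> U)"
      using assms(4) by (auto simp: openin_open)
  qed (use assms(6) in auto)
  then show ?thesis
    using assms Inv_Int_eq[of \<phi> N C]
    by (auto simp: isolating_nbhd_in_def interior_of_Int compact_Int_closed)
qed

lemma isolating_nbhd_in_Int_infdist_le:
  assumes "is_flow \<phi>" "isolating_nbhd_in \<phi> S N" "e > 0"
  shows "isolating_nbhd_in \<phi> S (N \<inter> {x. infdist x (Inv \<phi> N) \<le> e})"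
    and "Inv \<phi> (N \<inter> {x. infdist x (Inv \<phi> N) \<le> e}) = Inv \<phi> N"
proof -
  let ?C = "{x. infdist x (Inv \<phi> N) \<le> e}" and ?U = "{x. infdist x (Inv \<phi> N) < e}"
  have C: "closed ?C" and U: "open ?U"
    by (intro closed_Collect_le open_Collect_less continuous_intros)+
  have "Inv \<phi> N \<subseteq> ?U"
    using assms(3) by auto
  moreover have "?U \<subseteq> ?C"
    by auto
  ultimately show "isolating_nbhd_in \<phi> S (N \<inter> ?C)" and "Inv \<phi> (N \<inter> ?C) = Inv \<phi> N"
    using isolating_nbhd_in_Int[OF assms(1,2) C U] Inv_Int_eq[OF assms(1), of N ?C] by blast+
qed

lemma is_flow_reverse:
  assumes "is_flow \<phi>"
  shows "is_flow (\<lambda>x t. \<phi> x (- t))"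
proof -
  have "continuous_on UNIV (\<lambda>(x, t). \<phi> x (- t))"
    using continuous_on_compose2[OF continuous_on_flow[OF assms], of UNIV "\<lambda>(x, t). (x, - t)"]
    by (simp add: case_prod_unfold continuous_intros)
  then show ?thesis
    using assms by (simp add: is_flow_def)
qed

lemma full_solution_reverse:
  "full_solution \<phi> \<gamma> \<Longrightarrow> full_solution (\<lambda>x t. \<phi> x (- t)) (\<lambda>t. \<gamma> (- t))"
  unfolding full_solution_def by (metis minus_add_distrib)

lemma full_solution_in_reverse:
  "full_solution_in \<phi> S \<gamma> \<Longrightarrow> full_solution_in (\<lambda>x t. \<phi> x (- t)) S (\<lambda>t. \<gamma> (- t))"
  by (auto simp: full_solution_in_def full_solution_reverse)

lemma Inv_reverse: "Inv (\<lambda>x t. \<phi> x (- t)) N = Inv \<phi> N"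
  by (auto simp: Inv_def) (metis minus_minus rangeI subsetD)+

lemma alpha_limit_eq_omega_limit_reverse:
  "alpha_limit \<gamma> = omega_limit (\<lambda>t. \<gamma> (- t))"
proof -
  have "(\<lambda>t. \<gamma> (- t)) ` {t..} = \<gamma> ` {..- t}" for t :: real
    using image_image[of \<gamma> uminus "{t..}"] by simp
  then show ?thesis
    unfolding alpha_limit_def omega_limit_def
    using INF_image[of "\<lambda>t. closure (\<gamma> ` {..t})" uminus "{0::real<..}"] by (simp add: o_def)
qed

lemma wades_minus_iff_wades_plus_reverse:
  "wades_minus \<gamma> N \<longleftrightarrow> wades_plus (\<lambda>t. \<gamma> (- t)) N"
proof -
  have image: "(\<lambda>t. \<gamma> (- t)) ` {a..b} = \<gamma> ` {- b..- a}" for a b :: real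
    using image_image[of \<gamma> uminus "{a..b}"] by simp
  show ?thesis
  proof
    assume "wades_minus \<gamma> N"
    then obtain tm tp :: "nat \<Rightarrow> real" where "filterlim tp at_bot sequentially"
      "filterlim (\<lambda>n. tp n - tm n) at_top sequentially" "\<And>n. \<gamma> ` {tm n..tp n} \<subseteq> N"
      unfolding wades_minus_def by blast
    then show "wades_plus (\<lambda>t. \<gamma> (- t)) N"
      unfolding wades_plus_def image
      by (intro exI[of _ "\<lambda>n. - tp n"] exI[of _ "\<lambda>n. - tm n"])
        (simp add: filterlim_uminus_at_bot)
  next
    assume "wades_plus (\<lambda>t. \<gamma> (- t)) N"
    then obtain tm tp :: "nat \<Rightarrow> real" where "filterlim tm at_top sequentially"
      "filterlim (\<lambda>n. tp n - tm n) at_top sequentially" "\<And>n. \<gamma> ` {- tp n..- tm n} \<subseteq> N"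
      unfolding wades_plus_def image by blast
    then show "wades_minus \<gamma> N"
      unfolding wades_minus_def
      by (intro exI[of _ "\<lambda>n. - tp n"] exI[of _ "\<lambda>n. - tm n"])
        (simp add: filterlim_uminus_at_top[symmetric])
  qed
qed

lemma wades_plus_iff: "wades_plus \<gamma> N \<longleftrightarrow> (\<forall>T L. \<exists>s\<ge>T. \<gamma> ` {s..s + L} \<subseteq> N)"
proof
  assume "wades_plus \<gamma> N"
  then obtain tm tp :: "nat \<Rightarrow> real" where tm: "filterlim tm at_top sequentially"
    and len: "filterlim (\<lambda>n. tp n - tm n) at_top sequentially"
    and sub: "\<And>n. \<gamma> ` {tm n..tp n} \<subseteq> N"
    unfolding wades_plus_def by blast
  show "\<forall>T L. \<exists>s\<ge>T. \<gamma> ` {s..s + L} \<subseteq> N"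
  proof (intro allI)
    fix T L :: real
    have "\<forall>\<^sub>F n in sequentially. T \<le> tm n \<and> L \<le> tp n - tm n"
      using tm len by (auto simp: filterlim_at_top intro: eventually_conj)
    then obtain n where "T \<le> tm n" "L \<le> tp n - tm n"
      by (auto simp: eventually_sequentially)
    then show "\<exists>s\<ge>T. \<gamma> ` {s..s + L} \<subseteq> N"
      using sub[of n] by (intro exI[of _ "tm n"]) auto
  qed
next
  assume "\<forall>T L. \<exists>s\<ge>T. \<gamma> ` {s..s + L} \<subseteq> N"
  then have "\<forall>n::nat. \<exists>s. real n \<le> s \<and> \<gamma> ` {s..s + real n} \<subseteq> N"
    by blast
  from choice[OF this] obtain s
    where s: "\<And>n. real n \<le> s n" "\<And>n. \<gamma> ` {s n..s n + real n} \<subseteq> N"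
    by blast
  have "filterlim s at_top sequentially"
    using s(1) by (intro filterlim_at_top_mono[OF filterlim_real_sequentially]) auto
  then show "wades_plus \<gamma> N"
    unfolding wades_plus_def using s(2)
    by (intro exI[of _ s] exI[of _ "\<lambda>n. s n + real n"]) (simp add: filterlim_real_sequentially)
qed

lemma compact_family_uniformly_separated:
  fixes M :: "'p \<Rightarrow> 'a::metric_space set"
  assumes "finite P" "\<And>p. p \<in> P \<Longrightarrow> compact (M p)" "mutually_disjoint P M"
  obtains \<delta> where "\<delta> > 0"
    "\<And>p q a b. \<lbrakk>p \<in> P; q \<in> P; p \<noteq> q; a \<in> M p; b \<in> M q\<rbrakk> \<Longrightarrow> \<delta> \<le> dist a b"
proof -
  define K where "K = (\<Union>p\<in>P. \<Union>q\<in>P - {p}. M p \<times> M q)"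
  have "compact K"
    unfolding K_def using assms(1,2) by (intro compact_UN compact_Times) auto
  have K_off_diagonal: "a \<noteq> b" if "(a, b) \<in> K" for a b
    using that assms(3) by (auto simp: K_def mutually_disjoint_def)
  show ?thesis
  proof (cases "K = {}")
    case True
    then show ?thesis
      by (intro that[of 1]) (auto simp: K_def)
  next
    case False
    have "continuous_on K (\<lambda>y. dist (fst y) (snd y))"
      by (intro continuous_intros)
    then obtain z where "z \<in> K" and z_min: "\<forall>y\<in>K. dist (fst z) (snd z) \<le> dist (fst y) (snd y)"
      using continuous_attains_inf[OF \<open>compact K\<close> False] by blast
    then have "dist (fst z) (snd z) > 0"
      using K_off_diagonal[of "fst z" "snd z"] by simp
    then show ?thesis
      using z_min by (intro that[of "dist (fst z) (snd z)"]) (auto simp: K_def)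
  qed
qed

lemma infdist_less_imp_dist_less:
  assumes "infdist x A < e" "A \<noteq> {}"
  obtains a where "a \<in> A" "dist x a < e"
  using assms by (auto simp: infdist_def cINF_less_iff)

lemma disjoint_isolating_nbhds:
  fixes \<phi> :: "'a::metric_space \<Rightarrow> real \<Rightarrow> 'a"
  assumes "is_flow \<phi>" "finite P" "mutually_disjoint P M"
    and "\<forall>p\<in>P. isolated_invariant_in \<phi> S (M p)"
  obtains N where "mutually_disjoint P N"
    "\<And>p. p \<in> P \<Longrightarrow> isolating_nbhd_in \<phi> S (N p) \<and> M p = Inv \<phi> (N p)"
proof -
  obtain N' where N': "\<And>p. p \<in> P \<Longrightarrow> isolating_nbhd_in \<phi> S (N' p) \<and> M p = Inv \<phi> (N' p)"
    using assms(4) unfolding isolated_invariant_in_def by metis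
  obtain \<delta> where "\<delta> > 0" and separated:
    "\<And>p q a b. \<lbrakk>p \<in> P; q \<in> P; p \<noteq> q; a \<in> M p; b \<in> M q\<rbrakk> \<Longrightarrow> \<delta> \<le> dist a b"
    using compact_family_uniformly_separated[OF assms(2) _ assms(3)]
      isolated_invariant_inD(1)[OF assms(1)] assms(4) by metis
  \<comment> \<open>The case split is needed because \<open>infdist x {} = 0\<close>.\<close>
  define N where
    "N p = (if M p = {} then {} else N' p \<inter> {x. infdist x (M p) \<le> \<delta> / 3})" for p
  have "mutually_disjoint P N"
    unfolding mutually_disjoint_def
  proof (intro ballI impI equals0I)
    fix p q x assume "p \<in> P" "q \<in> P" "p \<noteq> q" "x \<in> N p \<inter> N q"
    then have "M p \<noteq> {}" "M q \<noteq> {}" "infdist x (M p) < \<delta> / 2" "infdist x (M q) < \<delta> / 2"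
      using \<open>\<delta> > 0\<close> by (auto simp: N_def split: if_splits)
    then obtain a b where "a \<in> M p" "dist x a < \<delta> / 2" "b \<in> M q" "dist x b < \<delta> / 2"
      by (metis infdist_less_imp_dist_less)
    then have "dist a b < \<delta>"
      using dist_triangle_half_l[of a x \<delta> b] by (simp add: dist_commute)
    then show False
      using separated[OF \<open>p \<in> P\<close> \<open>q \<in> P\<close> \<open>p \<noteq> q\<close> \<open>a \<in> M p\<close> \<open>b \<in> M q\<close>] by simp
  qed
  moreover have "isolating_nbhd_in \<phi> S (N p) \<and> M p = Inv \<phi> (N p)" if "p \<in> P" for p
  proof (cases "M p = {}")
    case True
    then show ?thesis
      by (simp add: N_def isolating_nbhd_in_def Inv_def)
  next
    case False
    then show ?thesis
      using isolating_nbhd_in_Int_infdist_le[OF assms(1), of S "N' p" "\<delta> / 3"] N'[OF that] \<open>\<delta> > 0\<close>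
      by (simp add: N_def)
  qed
  ultimately show ?thesis
    using that by blast
qed

lemma wades_plus_if_omega_limit_meets_Inv:
  assumes "is_flow \<phi>" "full_solution_in \<phi> S \<gamma>"
    and "x \<in> omega_limit \<gamma>" "x \<in> Inv \<phi> N"
    and "Inv \<phi> N \<subseteq> (top_of_set S) interior_of N"
  shows "wades_plus \<gamma> N"
  unfolding wades_plus_iff
proof (intro allI)
  fix T L :: real
  obtain U where "open U" and U: "(top_of_set S) interior_of N = S \<inter> U"
    using openin_open[THEN iffD1, OF openin_interior_of] by blast
  let ?W = "(\<lambda>(y, t). \<phi> y t) -` U"
  have "\<phi> x t \<in> U" for t
    using flow_in_Inv[OF assms(1,4)] assms(5) U by blast
  then have orbit: "{x} \<times> {0..L} \<subseteq> ?W"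
    by auto
  have "open ?W"
    by (rule open_vimage[OF \<open>open U\<close> continuous_on_flow[OF assms(1)]])
  then obtain X where "x \<in> X" "open X" "X \<times> {0..L} \<subseteq> ?W"
    using Elementary_Topology.tube_lemma[OF compact_Icc _ orbit] by blast
  moreover have "x \<in> closure (\<gamma> ` {max T 1..})"
    using assms(3) by (auto simp: omega_limit_def)
  ultimately have "X \<inter> \<gamma> ` {max T 1..} \<noteq> {}"
    using open_Int_closure_eq_empty[OF \<open>open X\<close>, of "\<gamma> ` {max T 1..}"] by blast
  then obtain s where "s \<ge> T" "\<gamma> s \<in> X"
    by auto
  have "\<gamma> v \<in> N" if "v \<in> {s..s + L}" for v
  proof -
    have "\<gamma> (s + (v - s)) = \<phi> (\<gamma> s) (v - s)"
      using assms(2) by (simp only: full_solution_in_def full_solution_def)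
    then have "\<gamma> v = \<phi> (\<gamma> s) (v - s)"
      by simp
    moreover have "(\<gamma> s, v - s) \<in> ?W"
      by (rule subsetD[OF \<open>X \<times> {0..L} \<subseteq> ?W\<close>]) (use \<open>\<gamma> s \<in> X\<close> that in auto)
    moreover have "\<gamma> v \<in> S"
      using assms(2) by (auto simp: full_solution_in_def)
    ultimately have "\<gamma> v \<in> S \<inter> U"
      by simp
    then show ?thesis
      using U interior_of_subset[of "top_of_set S" N] by blast
  qed
  then show "\<exists>s\<ge>T. \<gamma> ` {s..s + L} \<subseteq> N"
    using \<open>s \<ge> T\<close> by blast
qed

lemma omega_limit_meets_Inv_if_wades_plus:
  fixes \<phi> :: "'a::metric_space \<Rightarrow> real \<Rightarrow> 'a"
  assumes "is_flow \<phi>" "full_solution \<phi> \<gamma>" "compact N" "wades_plus \<gamma> N"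
  shows "omega_limit \<gamma> \<inter> Inv \<phi> N \<noteq> {}"
proof -
  have "\<forall>n::nat. \<exists>s. 2 * real n \<le> s \<and> \<gamma> ` {s..s + 2 * real n} \<subseteq> N"
    using assms(4) unfolding wades_plus_iff by blast
  from choice[OF this] obtain s
    where s: "\<And>n. 2 * real n \<le> s n" "\<And>n. \<gamma> ` {s n..s n + 2 * real n} \<subseteq> N"
    by blast
  define c where "c n = s n + real n" for n
  have c_wades: "\<gamma> (c n + t) \<in> N" if "\<bar>t\<bar> \<le> real n" for n t
  proof -
    have "c n + t \<in> {s n..s n + 2 * real n}"
      using that by (auto simp: c_def abs_le_iff)
    then show ?thesis
      using s(2)[of n] by blast
  qed
  have "\<forall>n. (\<gamma> \<circ> c) n \<in> N"
    using c_wades[of 0] by simp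
  then obtain y r where "y \<in> N" "strict_mono r" and "(\<gamma> \<circ> c \<circ> r) \<longlonglongrightarrow> y"
    using seq_compactE[OF compact_imp_seq_compact[OF assms(3)]] by blast
  then have lim: "(\<lambda>k. \<gamma> (c (r k))) \<longlonglongrightarrow> y"
    by (simp add: o_def)
  have r_large: "\<forall>\<^sub>F k in sequentially. t \<le> real (r k)" for t
    using filterlim_compose[OF filterlim_real_sequentially filterlim_subseq[OF \<open>strict_mono r\<close>]]
    by (simp add: filterlim_at_top)
  have "\<phi> y t \<in> N" for t
  proof (rule Lim_in_closed_set[OF compact_imp_closed[OF assms(3)]])
    show "((\<lambda>k. \<phi> (\<gamma> (c (r k))) t) \<longlongrightarrow> \<phi> y t) sequentially"
      using continuous_on_tendsto_compose[OF continuous_on_flow_at_time[OF assms(1)] lim] by simp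
    show "\<forall>\<^sub>F k in sequentially. \<phi> (\<gamma> (c (r k))) t \<in> N"
      using r_large[of "\<bar>t\<bar>"]
      by eventually_elim (metis assms(2) c_wades full_solution_def)
  qed simp
  then have "y \<in> Inv \<phi> N"
    using \<open>y \<in> N\<close> by (auto simp: Inv_def)
  moreover have "y \<in> closure (\<gamma> ` {t..})" for t
  proof (rule Lim_in_closed_set[OF closed_closure _ _ lim])
    show "\<forall>\<^sub>F k in sequentially. \<gamma> (c (r k)) \<in> closure (\<gamma> ` {t..})"
      using r_large[of t]
    proof eventually_elim
      case (elim k)
      then have "t \<le> c (r k)"
        using s(1)[of "r k"] by (simp add: c_def)
      then show ?case
        using closure_subset by fastforce
    qed
  qed simp
  then have "y \<in> omega_limit \<gamma>"
    by (simp add: omega_limit_def)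
  ultimately show ?thesis
    by blast
qed

lemma alpha_limit_meets_Inv_if_wades_minus:
  fixes \<phi> :: "'a::metric_space \<Rightarrow> real \<Rightarrow> 'a"
  assumes "is_flow \<phi>" "full_solution \<phi> \<gamma>" "compact N" "wades_minus \<gamma> N"
  shows "alpha_limit \<gamma> \<inter> Inv \<phi> N \<noteq> {}"
  using omega_limit_meets_Inv_if_wades_plus[OF is_flow_reverse[OF assms(1)]
      full_solution_reverse[OF assms(2)] assms(3)] assms(4)
  by (simp add: alpha_limit_eq_omega_limit_reverse Inv_reverse wades_minus_iff_wades_plus_reverse)

lemma wades_minus_if_alpha_limit_meets_Inv:
  assumes "is_flow \<phi>" "full_solution_in \<phi> S \<gamma>"
    and "x \<in> alpha_limit \<gamma>" "x \<in> Inv \<phi> N"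
    and "Inv \<phi> N \<subseteq> (top_of_set S) interior_of N"
  shows "wades_minus \<gamma> N"
  using wades_plus_if_omega_limit_meets_Inv[OF is_flow_reverse[OF assms(1)]
      full_solution_in_reverse[OF assms(2)]] assms(3-5)
  by (simp add: alpha_limit_eq_omega_limit_reverse Inv_reverse wades_minus_iff_wades_plus_reverse)

lemma morse_predecomposition_if_wading_nbhds:
  fixes \<phi> :: "'a::metric_space \<Rightarrow> real \<Rightarrow> 'a"
  assumes "is_flow \<phi>" "mutually_disjoint P M"
    and "\<forall>p\<in>P. isolated_invariant_in \<phi> S (M p)"
    and N: "\<forall>p\<in>P. isolating_nbhd_in \<phi> S (N p) \<and> M p = Inv \<phi> (N p)"
    and wading: "\<forall>\<gamma>. full_solution_in \<phi> S \<gamma> \<longrightarrow>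
      (\<exists>p\<in>P. \<exists>q\<in>P. wades_minus \<gamma> (N p) \<and> wades_plus \<gamma> (N q))"
  shows "morse_predecomposition \<phi> S P M"
proof -
  have "\<exists>p\<in>P. \<exists>q\<in>P. is_link_in \<phi> S \<gamma> (M p) (M q)" if \<gamma>: "full_solution_in \<phi> S \<gamma>" for \<gamma>
  proof -
    obtain p q where "p \<in> P" "q \<in> P" "wades_minus \<gamma> (N p)" "wades_plus \<gamma> (N q)"
      using wading \<gamma> by blast
    moreover have "full_solution \<phi> \<gamma>"
      using \<gamma> by (simp add: full_solution_in_def)
    ultimately have "alpha_limit \<gamma> \<inter> M p \<noteq> {}" "omega_limit \<gamma> \<inter> M q \<noteq> {}"
      using N alpha_limit_meets_Inv_if_wades_minus[OF assms(1)]
        omega_limit_meets_Inv_if_wades_plus[OF assms(1)]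
      by (auto simp: isolating_nbhd_in_def)
    then show ?thesis
      using \<gamma> \<open>p \<in> P\<close> \<open>q \<in> P\<close> by (auto simp: is_link_in_def)
  qed
  moreover have "closed (M p) \<and> invariant \<phi> (M p) \<and> M p \<subseteq> S" if "p \<in> P" for p
  proof -
    have "isolated_invariant_in \<phi> S (M p)"
      using assms(3) that by blast
    then show ?thesis
      using isolated_invariant_inD[OF assms(1)] by (simp add: compact_imp_closed)
  qed
  ultimately show ?thesis
    using assms(2) by (simp add: morse_predecomposition_def)
qed

lemma wading_nbhds_if_morse_predecomposition:
  fixes \<phi> :: "'a::metric_space \<Rightarrow> real \<Rightarrow> 'a"
  assumes "is_flow \<phi>" "finite P" "mutually_disjoint P M"
    and "\<forall>p\<in>P. isolated_invariant_in \<phi> S (M p)"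
    and "morse_predecomposition \<phi> S P M"
  shows "\<exists>N :: 'p \<Rightarrow> 'a set.
        mutually_disjoint P N
      \<and> (\<forall>p\<in>P. isolating_nbhd_in \<phi> S (N p) \<and> M p = Inv \<phi> (N p))
      \<and> (\<forall>\<gamma>. full_solution_in \<phi> S \<gamma> \<longrightarrow>
           (\<exists>p\<in>P. \<exists>q\<in>P. wades_minus \<gamma> (N p) \<and> wades_plus \<gamma> (N q)))"
proof -
  obtain N where "mutually_disjoint P N"
    and N: "\<And>p. p \<in> P \<Longrightarrow> isolating_nbhd_in \<phi> S (N p) \<and> M p = Inv \<phi> (N p)"
    using disjoint_isolating_nbhds[OF assms(1-4)] by blast
  have "\<exists>p\<in>P. \<exists>q\<in>P. wades_minus \<gamma> (N p) \<and> wades_plus \<gamma> (N q)"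
    if \<gamma>: "full_solution_in \<phi> S \<gamma>" for \<gamma>
  proof -
    obtain p q where "p \<in> P" "q \<in> P" "is_link_in \<phi> S \<gamma> (M p) (M q)"
      using assms(5) \<gamma> unfolding morse_predecomposition_def by blast
    then obtain x y where "x \<in> alpha_limit \<gamma>" "x \<in> M p" "y \<in> omega_limit \<gamma>" "y \<in> M q"
      by (auto simp: is_link_in_def)
    then have "wades_minus \<gamma> (N p)" "wades_plus \<gamma> (N q)"
      using N[OF \<open>p \<in> P\<close>] N[OF \<open>q \<in> P\<close>]
        wades_minus_if_alpha_limit_meets_Inv[OF assms(1) \<gamma>]
        wades_plus_if_omega_limit_meets_Inv[OF assms(1) \<gamma>]
      by (auto simp: isolating_nbhd_in_def)
    then show ?thesis
      using \<open>p \<in> P\<close> \<open>q \<in> P\<close> by blast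
  qed
  then show ?thesis
    using \<open>mutually_disjoint P N\<close> N by blast
qed

theorem theorem5p22:
  fixes \<phi> :: "'a::metric_space \<Rightarrow> real \<Rightarrow> 'a"
    and S :: "'a set"
    and P :: "'p set"
    and M :: "'p \<Rightarrow> 'a set"
  assumes "is_flow \<phi>"
    and "locally_compact_space (euclidean :: 'a topology)"
    and "S \<noteq> {}" and "compact S" and "invariant \<phi> S"
    and "finite P"
    and "mutually_disjoint P M"
    and "\<forall>p\<in>P. isolated_invariant_in \<phi> S (M p)"
  shows "morse_predecomposition \<phi> S P M \<longleftrightarrow>
    (\<exists>N :: 'p \<Rightarrow> 'a set.
        mutually_disjoint P N
      \<and> (\<forall>p\<in>P. isolating_nbhd_in \<phi> S (N p) \<and> M p = Inv \<phi> (N p))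
      \<and> (\<forall>\<gamma>. full_solution_in \<phi> S \<gamma> \<longrightarrow>
           (\<exists>p\<in>P. \<exists>q\<in>P. wades_minus \<gamma> (N p) \<and> wades_plus \<gamma> (N q))))"
  using wading_nbhds_if_morse_predecomposition[OF assms(1,6,7,8)]
    morse_predecomposition_if_wading_nbhds[OF assms(1,7,8)]
  by blast

end
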